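(* Fix $t\ge 0$ and let $\sigma\subseteq\mathcal C$ and $\tau\subseteq\mathcal Y^\circ$ be finite, nonempty subsets. Set $A:=\max_{x\in\sigma} r_{\mathcal C}(x)$, $B:=\max_{y\in\tau} r_{\mathcal Y}(y)$. Then $\sigma\cup\tau$ is a simplex of $\mathrm{VR}_t(\mathcal X,d_\theta)$ if and only if: (1) $\sigma$ is a simplex of $\mathrm{VR}_t(\mathcal C,\beta)$; (2) $\tau$ is a simplex of $\mathrm{VR}_t(\mathcal Y^\circ,d_{\mathrm{reg}})$; (3) $\|(A,B)\|_{\ell^p}\le t$.
   Context: Let $A$ be a unital $C^*$-algebra, $H$ a Hilbert space, $\mathcal X=\mathrm{CB}(A,B(H))$, $\mathcal C=\mathrm{CP}(A,B(H))$ with Bures distance $\beta$. Fix $\theta\in\mathcal C$, $\lambda>0$, $\alpha\in(0,1]$, $p\in[1,\infty]$ and let $d_\theta$ be the Bures--Kuratowski metric $\beta^{BK}_{\theta,\lambda,p,\alpha}$ on $\mathcal X$. Let $\mathcal Y=(\mathcal X\setminus\mathcal C)\sqcup\{\ast\}$ with metric $d_{\mathrm{reg}}(x,y)=\lambda\delta_{\mathrm{reg}}(x,y)^\alpha$, $d_{\mathrm{reg}}(x,\ast)=\lambda\delta_{\mathrm{reg}}(x,0)^\alpha$, where $\delta_{\mathrm{reg}}$ is the regular-representation metric, and $\mathcal Y^\circ=\mathcal Y\setminus\{\ast\}\cong\mathcal X\setminus\mathcal C$. Then $d_\theta=\beta$ on $\mathcal C$, $d_\theta=d_{\mathrm{reg}}$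 on $\mathcal Y^\circ$, and $d_\theta(x,y)=\|(r_{\mathcal C}(x),r_{\mathcal Y}(y))\|_{\ell^p}$ for $x\in\mathcal C$, $y\in\mathcal Y$, where $r_{\mathcal C}(x)=\beta(x,\theta)$ and $r_{\mathcal Y}(y)=d_{\mathrm{reg}}(y,\ast)$. For a metric space $(Z,d)$, $\mathrm{VR}_t(Z,d)$ is the simplicial complex on $Z$ whose simplices are finite subsets of diameter $\le t$. *)

theory Defs
  imports "HOL-Analysis.Analysis"
begin

definition metric_on :: "'a set \<Rightarrow> ('a \<Rightarrow> 'a \<Rightarrow> real) \<Rightarrow> bool" where
  "metric_on S d \<longleftrightarrow>
     (\<forall>x\<in>S. \<forall>y\<in>S. 0 \<le> d x y \<and> (d x y = 0 \<longleftrightarrow> x = y) \<and> d x y = d y x) \<and>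
     (\<forall>x\<in>S. \<forall>y\<in>S. \<forall>z\<in>S. d x z \<le> d x y + d y z)"

definition lp_norm2 :: "ereal \<Rightarrow> real \<Rightarrow> real \<Rightarrow> real" where
  "lp_norm2 p a b =
     (if p = \<infinity> then max \<bar>a\<bar> \<bar>b\<bar>
      else (\<bar>a\<bar> powr real_of_ereal p + \<bar>b\<bar> powr real_of_ereal p) powr (1 / real_of_ereal p))"

definition set_diam :: "('a \<Rightarrow> 'a \<Rightarrow> real) \<Rightarrow> 'a set \<Rightarrow> real" where
  "set_diam d S = Max {d x y | x y. x \<in> S \<and> y \<in> S}"

definition vr_simplex :: "'a set \<Rightarrow> ('a \<Rightarrow> 'a \<Rightarrow> real) \<Rightarrow> real \<Rightarrow> 'a set \<Rightarrow> bool" where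
  "vr_simplex Z d t S \<longleftrightarrow> finite S \<and> S \<noteq> {} \<and> S \<subseteq> Z \<and> set_diam d S \<le> t"

definition d_reg :: "real \<Rightarrow> real \<Rightarrow> ('a \<Rightarrow> 'a \<Rightarrow> real) \<Rightarrow> 'a \<Rightarrow> 'a \<Rightarrow> real" where
  "d_reg lam alpha delta x y = lam * (delta x y) powr alpha"

end

theory Submission
  imports Defs
begin

text \<open>Within each of the two pieces the metric d_theta is the given one, so the only new
  constraint on the diameter of sigma \<union> tau comes from the cross distances. These are the
  l^p norms of the pairs of radii (r_C(x), r_Y(y)), which are monotone in each radius; hence the
  largest cross distance is attained at a pair maximising both radii and equals
  ||(A, B)||_p.\<close>

lemma set_diam_le_iff:
  assumes "finite S" "S \<noteq> {}"
  shows "set_diam d S \<le> t \<longleftrightarrow> (\<forall>x\<in>S. \<forall>y\<in>S. d x y \<le> t)"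
proof -
  have pairs: "{d x y | x y. x \<in> S \<and> y \<in> S} = (\<lambda>(x, y). d x y) ` (S \<times> S)" by auto
  show ?thesis
    unfolding set_diam_def pairs using assms by (auto simp: Max_le_iff)
qed

lemma vr_simplex_iff:
  assumes "finite S" "S \<noteq> {}" "S \<subseteq> Z"
  shows "vr_simplex Z d t S \<longleftrightarrow> (\<forall>x\<in>S. \<forall>y\<in>S. d x y \<le> t)"
  using assms by (simp add: vr_simplex_def set_diam_le_iff)

lemma pairwise_le_Un_iff:
  assumes "\<And>x y. d x y = d y x"
  shows "(\<forall>x\<in>S \<union> T. \<forall>y\<in>S \<union> T. d x y \<le> t) \<longleftrightarrow>
           (\<forall>x\<in>S. \<forall>y\<in>S. d x y \<le> t) \<and> (\<forall>x\<in>T. \<forall>y\<in>T. d x y \<le> t) \<and>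
           (\<forall>x\<in>S. \<forall>y\<in>T. d x y \<le> t)"
  using assms by (auto 0 3)

lemma lp_norm2_mono:
  assumes "1 \<le> p" "0 \<le> a" "a \<le> a'" "0 \<le> b" "b \<le> b'"
  shows "lp_norm2 p a b \<le> lp_norm2 p a' b'"
proof (cases "p = \<infinity>")
  case True
  then show ?thesis using assms by (auto simp: lp_norm2_def le_max_iff_disj)
next
  case False
  define q where "q = real_of_ereal p"
  have q: "q \<ge> 1" using assms(1) False unfolding q_def by (cases p) auto
  have "a powr q + b powr q \<le> a' powr q + b' powr q"
    using assms q by (intro add_mono powr_mono2) auto
  then have "(a powr q + b powr q) powr (1 / q) \<le> (a' powr q + b' powr q) powr (1 / q)"
    using q by (intro powr_mono2) auto
  then show ?thesis using False assms unfolding lp_norm2_def q_def by simp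
qed

lemma lp_norm2_Max_le_iff:
  assumes "1 \<le> p"
    and S: "finite S" "S \<noteq> {}" and T: "finite T" "T \<noteq> {}"
    and f_nonneg: "\<forall>x\<in>S. 0 \<le> f x" and g_nonneg: "\<forall>y\<in>T. 0 \<le> g y"
  shows "lp_norm2 p (Max (f ` S)) (Max (g ` T)) \<le> t \<longleftrightarrow>
           (\<forall>x\<in>S. \<forall>y\<in>T. lp_norm2 p (f x) (g y) \<le> t)"
proof
  assume all: "\<forall>x\<in>S. \<forall>y\<in>T. lp_norm2 p (f x) (g y) \<le> t"
  have "Max (f ` S) \<in> f ` S" "Max (g ` T) \<in> g ` T"
    using S T by (auto intro: Max_in)
  then obtain x0 y0 where "x0 \<in> S" "Max (f ` S) = f x0" "y0 \<in> T" "Max (g ` T) = g y0"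
    by blast
  then show "lp_norm2 p (Max (f ` S)) (Max (g ` T)) \<le> t"
    using all by simp
next
  assume bound: "lp_norm2 p (Max (f ` S)) (Max (g ` T)) \<le> t"
  show "\<forall>x\<in>S. \<forall>y\<in>T. lp_norm2 p (f x) (g y) \<le> t"
  proof (intro ballI)
    fix x y assume "x \<in> S" "y \<in> T"
    then have "lp_norm2 p (f x) (g y) \<le> lp_norm2 p (Max (f ` S)) (Max (g ` T))"
      using S T f_nonneg g_nonneg by (intro lp_norm2_mono \<open>1 \<le> p\<close>) auto
    then show "lp_norm2 p (f x) (g y) \<le> t" using bound by linarith
  qed
qed

theorem proposition6p3:
  fixes C :: "'x set"
    and beta delta dtheta :: "'x \<Rightarrow> 'x \<Rightarrow> real"
    and theta zero :: 'x
    and lam alpha t :: real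
    and p :: ereal
    and sigma tau :: "'x set"
  assumes dtheta_metric: "metric_on UNIV dtheta"
    and beta_metric: "metric_on C beta"
    and delta_metric: "metric_on UNIV delta"
    and theta_in: "theta \<in> C"
    and zero_in: "zero \<in> C"
    and lam_pos: "lam > 0"
    and alpha_pos: "0 < alpha" and alpha_le: "alpha \<le> 1"
    and p_ge: "1 \<le> p"
    and on_C: "\<forall>x\<in>C. \<forall>y\<in>C. dtheta x y = beta x y"
    and on_Y: "\<forall>x\<in>-C. \<forall>y\<in>-C. dtheta x y = d_reg lam alpha delta x y"
    and cross: "\<forall>x\<in>C. \<forall>y\<in>-C.
                  dtheta x y = lp_norm2 p (beta x theta) (d_reg lam alpha delta y zero)"
    and t_nonneg: "0 \<le> t"
    and sigma: "finite sigma" "sigma \<noteq> {}" "sigma \<subseteq> C"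
    and tau: "finite tau" "tau \<noteq> {}" "tau \<subseteq> -C"
  shows "vr_simplex UNIV dtheta t (sigma \<union> tau) \<longleftrightarrow>
           vr_simplex C beta t sigma \<and>
           vr_simplex (-C) (d_reg lam alpha delta) t tau \<and>
           lp_norm2 p (Max ((\<lambda>x. beta x theta) ` sigma))
                      (Max ((\<lambda>y. d_reg lam alpha delta y zero) ` tau)) \<le> t"
proof -
  have sym: "\<And>x y. dtheta x y = dtheta y x"
    using dtheta_metric unfolding metric_on_def by auto
  have radius_C_nonneg: "\<forall>x\<in>sigma. 0 \<le> beta x theta"
    using beta_metric theta_in sigma unfolding metric_on_def by auto
  have radius_Y_nonneg: "\<forall>y\<in>tau. 0 \<le> d_reg lam alpha delta y zero"
    using lam_pos unfolding d_reg_def by simp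
  have "vr_simplex UNIV dtheta t (sigma \<union> tau) \<longleftrightarrow>
          (\<forall>x\<in>sigma \<union> tau. \<forall>y\<in>sigma \<union> tau. dtheta x y \<le> t)"
    using sigma tau by (intro vr_simplex_iff) auto
  also have "\<dots> \<longleftrightarrow> (\<forall>x\<in>sigma. \<forall>y\<in>sigma. dtheta x y \<le> t) \<and>
                    (\<forall>x\<in>tau. \<forall>y\<in>tau. dtheta x y \<le> t) \<and>
                    (\<forall>x\<in>sigma. \<forall>y\<in>tau. dtheta x y \<le> t)"
    using sym by (rule pairwise_le_Un_iff)
  also have "\<dots> \<longleftrightarrow> (\<forall>x\<in>sigma. \<forall>y\<in>sigma. beta x y \<le> t) \<and>
                    (\<forall>x\<in>tau. \<forall>y\<in>tau. d_reg lam alpha delta x y \<le> t) \<and>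
                    (\<forall>x\<in>sigma. \<forall>y\<in>tau.
                       lp_norm2 p (beta x theta) (d_reg lam alpha delta y zero) \<le> t)"
    using on_C on_Y cross sigma(3) tau(3) by (auto simp: subset_iff)
  also have "\<dots> \<longleftrightarrow> vr_simplex C beta t sigma \<and>
                    vr_simplex (-C) (d_reg lam alpha delta) t tau \<and>
                    lp_norm2 p (Max ((\<lambda>x. beta x theta) ` sigma))
                               (Max ((\<lambda>y. d_reg lam alpha delta y zero) ` tau)) \<le> t"
    by (simp only: vr_simplex_iff[OF sigma] vr_simplex_iff[OF tau]
        lp_norm2_Max_le_iff[OF p_ge sigma(1,2) tau(1,2) radius_C_nonneg radius_Y_nonneg])
  finally show ?thesis .
qed

end
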